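(* Let $\widehat B\in\mathbb R^K$ be fixed and define, for $\widehat U=(\widehat h,\widehat{q^x},\widehat{q^y})\in\mathbb R^{3K}$ with $\mathcal P(\widehat h)$ invertible, $$E(\widehat U)=\tfrac12\big((\widehat{q^x})^\top\widehat u+(\widehat{q^y})^\top\widehat v\big)+\tfrac12 g\|\widehat h\|^2+g\,\widehat h^\top\widehat B,\qquad \widehat u=\mathcal P^{-1}(\widehat h)\widehat{q^x},\ \widehat v=\mathcal P^{-1}(\widehat h)\widehat{q^y}.$$ If $\mathcal P(\widehat h)$ is positive definite, then $E$ is convex in $\widehat U$.
   Context: Let $\xi$ be a random variable in $\mathbb R^d$ with density $\rho$ having finite moments of all orders, and let $\phi_1\equiv1,\phi_2,\dots,\phi_K$ be polynomials orthonormal in $L^2_\rho$. For $k=1,\dots,K$ let $\mathcal M_k\in\mathbb R^{K\times K}$ with $(\mathcal M_k)_{l,m}=\int\phi_k\phi_l\phi_m\rho$, and for $\widehat z\in\mathbb R^K$ set $\mathcal P(\widehat z)=\sum_{k=1}^K\widehat z_k\mathcal M_k$. $g>0$ is a constant. Convexity is understood on the (convex) set of $\widehat U$ with $\mathcal P(\widehat h)$ positive definite. *)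

theory Defs
  imports "HOL-Analysis.Analysis"
begin

definition poly_fun :: "(real^'d \<Rightarrow> real) \<Rightarrow> bool" where
  "poly_fun p \<longleftrightarrow> (\<exists>(A :: ('d \<Rightarrow> nat) set) c. finite A \<and>
      (\<forall>x. p x = (\<Sum>\<alpha>\<in>A. c \<alpha> * (\<Prod>i\<in>UNIV. (x $ i) ^ \<alpha> i))))"

definition density_all_moments :: "(real^'d \<Rightarrow> real) \<Rightarrow> bool" where
  "density_all_moments \<rho> \<longleftrightarrow> \<rho> \<in> borel_measurable lborel \<and> (\<forall>x. 0 \<le> \<rho> x)
     \<and> integral\<^sup>L lborel \<rho> = 1
     \<and> (\<forall>n::nat. integrable lborel (\<lambda>x. \<rho> x * norm x ^ n))"

definition Mmat :: "('k \<Rightarrow> real^'d \<Rightarrow> real) \<Rightarrow> (real^'d \<Rightarrow> real) \<Rightarrow> 'k \<Rightarrow> real^'k^'k" where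
  "Mmat \<phi> \<rho> k = (\<chi> l m. integral\<^sup>L lborel (\<lambda>x. \<phi> k x * \<phi> l x * \<phi> m x * \<rho> x))"

definition Pmat :: "('k::finite \<Rightarrow> real^'d \<Rightarrow> real) \<Rightarrow> (real^'d \<Rightarrow> real) \<Rightarrow> real^'k \<Rightarrow> real^'k^'k" where
  "Pmat \<phi> \<rho> z = (\<Sum>k\<in>UNIV. z $ k *\<^sub>R Mmat \<phi> \<rho> k)"

definition pos_def_mat :: "real^'k^'k \<Rightarrow> bool" where
  "pos_def_mat A \<longleftrightarrow> transpose A = A \<and> (\<forall>x. x \<noteq> 0 \<longrightarrow> 0 < x \<bullet> (A *v x))"

definition energy :: "('k::finite \<Rightarrow> real^'d \<Rightarrow> real) \<Rightarrow> (real^'d \<Rightarrow> real) \<Rightarrow> real \<Rightarrow> real^'k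
    \<Rightarrow> (real^'k) \<times> (real^'k) \<times> (real^'k) \<Rightarrow> real" where
  "energy \<phi> \<rho> g B U = (case U of (h, qx, qy) \<Rightarrow>
     (let u = matrix_inv (Pmat \<phi> \<rho> h) *v qx; v = matrix_inv (Pmat \<phi> \<rho> h) *v qy
      in (1/2) * (qx \<bullet> u + qy \<bullet> v) + (1/2) * g * (norm h)\<^sup>2 + g * (h \<bullet> B)))"

end

theory Submission
  imports Defs
begin

text \<open>For a positive definite A the matrix-fractional function q\<bullet>(A^-1 q) has the variational
  form max_x (2 x\<bullet>q - x\<bullet>(A x)), the maximum being attained at x = A^-1 q. As a pointwise
  maximum of functions that are linear in (A, q) it is jointly convex on the positive definite
  cone. The energy consists of two such terms composed with the linear map h \<mapsto> P(h), a convex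
  quadratic and a linear term in h, so it is convex.\<close>

lemma convex_on_pointwise_max:
  assumes "convex S"
    and "\<And>w. convex_on S (\<lambda>z. F z w)"
    and "\<And>z w. z \<in> S \<Longrightarrow> F z w \<le> f z"
    and "\<And>z. z \<in> S \<Longrightarrow> \<exists>w. f z = F z w"
  shows "convex_on S f"
  unfolding convex_on_def
proof (intro conjI ballI allI impI)
  fix x y and u v :: real
  assume xy: "x \<in> S" "y \<in> S" and uv: "0 \<le> u" "0 \<le> v" "u + v = 1"
  then have "u *\<^sub>R x + v *\<^sub>R y \<in> S"
    using \<open>convex S\<close> by (simp add: convex_def)
  then obtain w where "f (u *\<^sub>R x + v *\<^sub>R y) = F (u *\<^sub>R x + v *\<^sub>R y) w"
    using assms(4) by blast
  also have "\<dots> \<le> u * F x w + v * F y w"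
    using assms(2) xy uv by (simp add: convex_on_def)
  also have "\<dots> \<le> u * f x + v * f y"
    using assms(3) xy uv by (intro add_mono mult_left_mono) auto
  finally show "f (u *\<^sub>R x + v *\<^sub>R y) \<le> u * f x + v * f y" .
qed (fact \<open>convex S\<close>)

lemma convex_on_linear_vimage:
  assumes "linear f" and "convex_on S F"
  shows "convex_on (f -` S) (F \<circ> f)"
  using assms convex_linear_vimage[OF assms(1) convex_on_imp_convex[OF assms(2)]]
  by (simp add: convex_on_def linear_add linear_scale)

lemma convex_on_linear:
  fixes f :: "'a::real_vector \<Rightarrow> real"
  assumes "linear f" and "convex S"
  shows "convex_on S f"
  using assms by (simp add: convex_on_def linear_add linear_scale)

lemma convex_on_norm_power2:
  "convex_on UNIV (\<lambda>x :: 'a::real_normed_vector. (norm x)\<^sup>2)"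
  unfolding convex_on_def
proof (intro conjI ballI allI impI)
  fix a b :: 'a and u v :: real
  assume uv: "0 \<le> u" "0 \<le> v" "u + v = 1"
  have "norm (u *\<^sub>R a + v *\<^sub>R b) \<le> u * norm a + v * norm b"
    using uv by (metis abs_of_nonneg norm_scaleR norm_triangle_ineq)
  then have "(norm (u *\<^sub>R a + v *\<^sub>R b))\<^sup>2 \<le> (u * norm a + v * norm b)\<^sup>2"
    by (simp add: power_mono)
  also have "\<dots> = u * (norm a)\<^sup>2 + v * (norm b)\<^sup>2 - u * v * (norm a - norm b)\<^sup>2"
    using uv(3) by (simp add: power2_eq_square eq_diff_eq[symmetric]) (simp add: algebra_simps)
  also have "\<dots> \<le> u * (norm a)\<^sup>2 + v * (norm b)\<^sup>2"
    using uv by simp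
  finally show "(norm (u *\<^sub>R a + v *\<^sub>R b))\<^sup>2 \<le> u * (norm a)\<^sup>2 + v * (norm b)\<^sup>2" .
qed simp

lemma pos_def_mat_matrix_inv_right:
  fixes A :: "real^'k::finite^'k"
  assumes "pos_def_mat A"
  shows "A ** matrix_inv A = mat 1"
proof -
  have "A *v x = 0 \<Longrightarrow> x = 0" for x
    using assms unfolding pos_def_mat_def by force
  then have "invertible A"
    using invertible_left_inverse matrix_left_invertible_ker by blast
  then have "\<exists>A'. A ** A' = mat 1 \<and> A' ** A = mat 1"
    by (simp add: invertible_def)
  then show ?thesis
    unfolding matrix_inv_def by (metis (mono_tags, lifting) someI_ex)
qed

lemma pos_def_mat_convex_comb:
  fixes A1 A2 :: "real^'k::finite^'k"
  assumes "pos_def_mat A1" "pos_def_mat A2" "0 \<le> u" "0 \<le> v" "u + v = 1"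
  shows "pos_def_mat (u *\<^sub>R A1 + v *\<^sub>R A2)"
  unfolding pos_def_mat_def
proof (intro conjI allI impI)
  show "transpose (u *\<^sub>R A1 + v *\<^sub>R A2) = u *\<^sub>R A1 + v *\<^sub>R A2"
    using assms(1,2) by (simp add: pos_def_mat_def transpose_def vec_eq_iff)
  fix x :: "real^'k" assume "x \<noteq> 0"
  then have "0 < x \<bullet> (A1 *v x)" "0 < x \<bullet> (A2 *v x)"
    using assms(1,2) pos_def_mat_def by auto
  then have "0 < u * (x \<bullet> (A1 *v x)) + v * (x \<bullet> (A2 *v x))"
    using assms(3-5) by (cases "u = 0") (auto intro: add_pos_nonneg)
  then show "0 < x \<bullet> ((u *\<^sub>R A1 + v *\<^sub>R A2) *v x)"
    by (simp add: matrix_vector_mult_add_rdistrib inner_add_right flip: scaleR_matrix_vector_assoc)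
qed

lemma convex_pos_def_mat: "convex {A :: real^'k::finite^'k. pos_def_mat A}"
  by (auto simp: convex_def intro: pos_def_mat_convex_comb)

lemma pos_def_mat_matrix_frac_ge:
  fixes A :: "real^'k::finite^'k"
  assumes "pos_def_mat A"
  shows "2 * (x \<bullet> q) - x \<bullet> (A *v x) \<le> q \<bullet> (matrix_inv A *v q)"
proof -
  define y where "y = matrix_inv A *v q"
  have q: "q = A *v y"
    by (simp add: y_def matrix_vector_mul_assoc pos_def_mat_matrix_inv_right[OF assms])
  have "x \<bullet> (A *v y) = (transpose A *v x) \<bullet> y"
    by (simp add: dot_lmul_matrix)
  then have sym: "x \<bullet> (A *v y) = y \<bullet> (A *v x)"
    using assms by (metis pos_def_mat_def inner_commute)
  have "0 \<le> (x - y) \<bullet> (A *v (x - y))"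
    using assms unfolding pos_def_mat_def by (cases "x = y") (auto intro: less_imp_le)
  also have "\<dots> = x \<bullet> (A *v x) - 2 * (x \<bullet> q) + q \<bullet> y"
    using sym by (simp add: q matrix_vector_mult_diff_distrib inner_diff_left inner_diff_right inner_commute)
  finally show ?thesis
    by (simp add: y_def)
qed

lemma pos_def_mat_matrix_frac_eq:
  fixes A :: "real^'k::finite^'k"
  assumes "pos_def_mat A"
  shows "q \<bullet> (matrix_inv A *v q)
    = 2 * ((matrix_inv A *v q) \<bullet> q) - (matrix_inv A *v q) \<bullet> (A *v (matrix_inv A *v q))"
  by (simp add: matrix_vector_mul_assoc pos_def_mat_matrix_inv_right[OF assms] inner_commute)

lemma convex_on_matrix_frac:
  "convex_on {p :: (real^'k::finite^'k) \<times> (real^'k). pos_def_mat (fst p)}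
     (\<lambda>p. snd p \<bullet> (matrix_inv (fst p) *v snd p))"
proof (rule convex_on_pointwise_max[where F = "\<lambda>p x. 2 * (x \<bullet> snd p) - x \<bullet> (fst p *v x)"])
  show "convex {p :: (real^'k^'k) \<times> (real^'k). pos_def_mat (fst p)}"
    using convex_linear_vimage[OF linear_fst convex_pos_def_mat] by (simp add: vimage_def)
  then show "convex_on {p :: (real^'k^'k) \<times> (real^'k). pos_def_mat (fst p)}
      (\<lambda>p. 2 * (x \<bullet> snd p) - x \<bullet> (fst p *v x))" for x
    by (intro convex_on_linear linearI)
      (auto simp: inner_add_right matrix_vector_mult_add_rdistrib algebra_simps simp flip: scaleR_matrix_vector_assoc)
qed (auto intro: pos_def_mat_matrix_frac_ge pos_def_mat_matrix_frac_eq)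

lemma convex_on_matrix_frac_linear:
  fixes P :: "'a::real_vector \<Rightarrow> real^'k::finite^'k" and q :: "'a \<Rightarrow> real^'k"
  assumes "linear P" and "linear q"
  shows "convex_on {z. pos_def_mat (P z)} (\<lambda>z. q z \<bullet> (matrix_inv (P z) *v q z))"
proof -
  have "linear (\<lambda>z. (P z, q z))"
    using assms by (intro linearI) (simp_all add: linear_add linear_scale)
  from convex_on_linear_vimage[OF this convex_on_matrix_frac]
  show ?thesis
    by (simp add: vimage_def o_def)
qed

lemma linear_Pmat: "linear (Pmat \<phi> \<rho>)"
  by (rule linearI) (simp_all add: Pmat_def scaleR_add_left sum.distrib scaleR_sum_right)

theorem lemma3p2:
  fixes \<rho> :: "real^'d \<Rightarrow> real"
    and \<phi> :: "'k::finite \<Rightarrow> real^'d \<Rightarrow> real"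
    and k1 :: 'k
    and g :: real
    and B :: "real^'k"
  assumes dens: "density_all_moments \<rho>"
    and poly: "\<And>k. poly_fun (\<phi> k)"
    and one: "\<phi> k1 = (\<lambda>_. 1)"
    and orth: "\<And>l m. integral\<^sup>L lborel (\<lambda>x. \<phi> l x * \<phi> m x * \<rho> x) = (if l = m then 1 else 0)"
    and g: "g > 0"
  shows "convex_on {(h, qx, qy). pos_def_mat (Pmat \<phi> \<rho> h)} (energy \<phi> \<rho> g B)"
proof -
  let ?P = "\<lambda>U :: (real^'k) \<times> (real^'k) \<times> (real^'k). Pmat \<phi> \<rho> (fst U)"
  let ?S = "{U. pos_def_mat (?P U)}"
  have lin_P: "linear ?P"
    using linear_compose[OF linear_fst linear_Pmat] by (simp add: o_def)
  have frac: "convex_on ?S (\<lambda>U. fst (snd U) \<bullet> (matrix_inv (?P U) *v fst (snd U)))"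
    "convex_on ?S (\<lambda>U. snd (snd U) \<bullet> (matrix_inv (?P U) *v snd (snd U)))"
    using convex_on_matrix_frac_linear[OF lin_P] linear_compose[OF linear_snd linear_fst]
      linear_compose[OF linear_snd linear_snd] by (simp_all add: o_def)
  have "convex ?S"
    using convex_on_imp_convex[OF frac(1)] .
  then have quad: "convex_on ?S (\<lambda>U. (norm (fst U))\<^sup>2)"
    using convex_on_subset[OF convex_on_linear_vimage[OF linear_fst convex_on_norm_power2]]
    by (simp add: o_def)
  have lin_B: "convex_on ?S (\<lambda>U. fst U \<bullet> B)"
    using \<open>convex ?S\<close> by (auto intro!: convex_on_linear linearI simp: inner_add_left)
  have "convex_on ?S (\<lambda>U. (1/2) * (fst (snd U) \<bullet> (matrix_inv (?P U) *v fst (snd U))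
      + snd (snd U) \<bullet> (matrix_inv (?P U) *v snd (snd U))) + (1/2) * g * (norm (fst U))\<^sup>2 + g * (fst U \<bullet> B))"
    using frac quad lin_B g
    by (intro convex_on_add convex_on_cmul) (simp_all add: mult.assoc)
  then show ?thesis
    by (simp add: energy_def[abs_def] case_prod_unfold Let_def)
qed

end
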